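(* Let $n\ge2$, let $K\ge0$ be a measurable function on $\mathbb{R}^n$ with $K\in L^\infty(\mathbb{R}^n\setminus B_1)$, and let $v$ be a function with $Ke^{nv}\in L^1(\mathbb{R}^n)$ satisfying, for some $c\in\mathbb{R}$ and all $x\in\mathbb{R}^n$, $$v(x)=\frac{1}{\gamma_n}\int_{\mathbb{R}^n}\log\left(\frac{1+|y|}{|x-y|}\right)K(y)e^{nv(y)}dy+c.$$ Then $$\lim_{|x|\to\infty}\frac{v(x)}{\log|x|}=-\frac{1}{\gamma_n}\int_{\mathbb{R}^n}Ke^{nv}dx.$$
   Context: $|S^n|$ is the volume of the unit $n$-sphere and $\gamma_n:=\frac{(n-1)!}{2}|S^n|$; $B_1$ is the unit ball centered at the origin. *)

theory Defs
  imports "HOL-Analysis.Analysis"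
begin

text \<open>Volume (surface measure) of the unit n-sphere S^n in R^(n+1).\<close>
definition sphere_vol :: "nat \<Rightarrow> real" where
  "sphere_vol n = 2 * pi powr ((real n + 1) / 2) / Gamma ((real n + 1) / 2)"

definition gamma_const :: "nat \<Rightarrow> real" where
  "gamma_const n = fact (n - 1) / 2 * sphere_vol n"

end

theory Submission
  imports Defs
begin

(*
  Put f = K e^(n v) and alpha = integral of f. For |x| >= 1 the kernel ln((1 + |y|) / |x - y|) + ln |x|
  is nonnegative; it is bounded by a constant depending on rho where |y| <= rho (apart from the
  singularity ln(1 / |x - y|) at y = x) and by O(ln |x|) where |y| > rho. Integrating against f,
  gamma_n (v x - c) + alpha ln |x| lies between 0 and C_rho + O(ln |x|) (mass of f outside B_rho) + w x,
  where w x is the integral of ln(1 / |x - y|) f y over B(x, 1). So it suffices that w is bounded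
  at infinity.

  The same estimate gives v <= w / gamma_n + c far out, hence f <= C e^(phi w) on B(x, 1), K being
  bounded there. Once the mass m of f on B(x, 2) satisfies 2 phi m <= 1, Jensen's inequality and
  Fubini bound the integral of e^(2 phi w) over B(x, 1) (the Brezis--Merle argument). Together with
  ln(1 / d) f <= C (1 / d + e^(2 phi w)) and the integrability of 1 / |y| near 0 for n >= 2, this
  bounds w x independently of x.
*)

definition tail_integral :: "('a::euclidean_space \<Rightarrow> real) \<Rightarrow> real \<Rightarrow> real" where
  "tail_integral f r = (LINT y|lebesgue. indicator {y. r < norm y} y * f y)"

definition local_log_potential :: "('a::euclidean_space \<Rightarrow> real) \<Rightarrow> 'a \<Rightarrow> real" where
  "local_log_potential f x = (LINT y|lebesgue. indicator (ball x 1) y * (- ln (norm (x - y))) * f y)"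

lemma gamma_const_pos: "gamma_const n > 0"
  unfolding gamma_const_def sphere_vol_def by (intro mult_pos_pos divide_pos_pos) auto

subsection \<open>Pointwise bounds for the logarithmic kernel\<close>

lemma ln_kernel_plus_ln_nonneg:
  fixes x y :: "'a::real_normed_vector"
  assumes "1 \<le> norm x"
  shows "0 \<le> ln ((1 + norm y) / norm (x - y)) + ln (norm x)"
proof (cases "y = x")
  case True
  then show ?thesis using assms by simp
next
  case False
  then have d: "norm (x - y) > 0" by simp
  have "norm (x - y) \<le> norm x + norm y" by (rule norm_triangle_ineq4)
  also have "\<dots> \<le> norm x * (1 + norm y)"
    using mult_right_mono[OF assms, of "norm y"] by (simp add: algebra_simps)
  finally have "1 \<le> norm x * ((1 + norm y) / norm (x - y))"
    using d by (simp add: field_simps)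
  then have "0 \<le> ln (norm x * ((1 + norm y) / norm (x - y)))" by simp
  also have "\<dots> = ln (norm x) + ln ((1 + norm y) / norm (x - y))"
    using d assms by (intro ln_mult_pos) (auto intro!: divide_pos_pos add_pos_nonneg)
  finally show ?thesis by simp
qed

lemma ln_kernel_plus_ln_le:
  fixes x y :: "'a::real_normed_vector"
  assumes R3: "3 \<le> norm x" and rho: "0 \<le> \<rho>" "2 * \<rho> \<le> norm x"
  shows "ln ((1 + norm y) / norm (x - y)) + ln (norm x) \<le> ln 2 + ln (1 + \<rho>)
    + 5 * ln (norm x) * indicator {y. \<rho> < norm y} y + indicator (ball x 1) y * (- ln (norm (x - y)))"
proof -
  define R where "R = norm x"
  define d where "d = norm (x - y)"
  define r where "r = norm y"
  have lnR: "ln R \<ge> 0" using R3 R_def by simp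
  have R0: "R > 0" using R3 R_def by linarith
  have lnrho: "ln (1 + \<rho>) \<ge> 0" using rho by simp
  have t1: "r \<le> R + d" unfolding r_def R_def d_def
    using norm_triangle_sub[of y x] by (simp add: norm_minus_commute)
  have t2: "R \<le> r + d" unfolding r_def R_def d_def
    using norm_triangle_sub[of x y] by simp
  have R2: "ln (R + 2) \<le> ln 2 + ln R"
  proof -
    have "ln (R + 2) \<le> ln (2 * R)" using R3 R_def by (subst ln_le_cancel_iff) auto
    also have "\<dots> = ln 2 + ln R" using R0 by (simp add: ln_mult)
    finally show ?thesis .
  qed
  show ?thesis
  proof (cases "y = x")
    case True
    then show ?thesis using R3 rho lnR lnrho by (simp add: R_def)
  next
    case False
    then have d: "d > 0" by (simp add: d_def)
    have r1: "1 + r > 0" by (simp add: r_def add_pos_nonneg)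
    have lnd: "ln ((1 + r) / d) = ln (1 + r) - ln d" using r1 d by (rule ln_divide_pos)
    consider "r \<le> \<rho>" | "\<rho> < r \<and> 1 \<le> d" | "\<rho> < r \<and> d < 1" by linarith
    then show ?thesis
    proof cases
      case 1
      have dR: "d \<ge> R / 2" using t2 1 rho R_def by linarith
      have "ln (1 + r) \<le> ln (1 + \<rho>)" using 1 r1 by simp
      moreover have "ln (R / 2) \<le> ln d" using dR R0 d by (subst ln_le_cancel_iff) auto
      moreover have "ln (R / 2) = ln R - ln 2" using R0 by (simp add: ln_div)
      moreover have "y \<notin> ball x 1" using dR R3 R_def by (simp add: d_def dist_norm)
      ultimately show ?thesis using lnd 1
        by (simp add: R_def[symmetric] d_def[symmetric] r_def[symmetric])
    next
      case 2
      have "R \<le> R * d" using 2 R0 by simp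
      then have "1 + r \<le> (R + 2) * d" using t1 2 by (simp add: algebra_simps)
      then have "(1 + r) / d \<le> R + 2" using d by (simp add: field_simps)
      then have "ln ((1 + r) / d) \<le> ln (R + 2)" using d r1 R0 by (subst ln_le_cancel_iff) auto
      moreover have "y \<notin> ball x 1" using 2 by (simp add: d_def dist_norm)
      ultimately show ?thesis using 2 R2 lnR lnrho
        by (simp add: R_def[symmetric] d_def[symmetric] r_def[symmetric])
    next
      case 3
      have "ln (1 + r) \<le> ln (R + 2)" using t1 3 r1 R0 by (subst ln_le_cancel_iff) auto
      moreover have "y \<in> ball x 1" using 3 by (simp add: d_def dist_norm)
      ultimately show ?thesis using 3 R2 lnR lnrho lnd
        by (simp add: R_def[symmetric] d_def[symmetric] r_def[symmetric])
    qed
  qed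
qed

lemma local_log_kernel_nonneg:
  fixes x y :: "'a::real_normed_vector"
  shows "0 \<le> indicator (ball x 1) y * (- ln (norm (x - y)))"
proof (cases "y \<in> ball x 1")
  case True
  then have "ln (norm (x - y)) \<le> 0"
    by (cases "x = y") (auto simp: dist_norm intro: ln_le_zero_iff[THEN iffD2])
  then show ?thesis using True by simp
qed simp

subsection \<open>Tails and local potentials of integrable densities\<close>

lemma pred_mem_ball [measurable]: "Measurable.pred borel (\<lambda>y::'a::euclidean_space. y \<in> ball x r)"
  by (rule pred_sets2[OF borel_open]) auto

lemma sets_lebesgue_open: "open S \<Longrightarrow> S \<in> sets (lebesgue :: 'a::euclidean_space measure)"
  by (metis borel_open sets_completionI_sets sets_lborel)

lemma integrable_indicator_open_mult:
  fixes f :: "'a::euclidean_space \<Rightarrow> real"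
  assumes "integrable lebesgue f" "open S"
  shows "integrable lebesgue (\<lambda>y. indicator S y * f y)"
  using integrable_mult_indicator[OF sets_lebesgue_open[OF assms(2)] assms(1)] by simp

lemma integrable_tail:
  fixes f :: "'a::euclidean_space \<Rightarrow> real"
  shows "integrable lebesgue f \<Longrightarrow> integrable lebesgue (\<lambda>y. indicator {y. r < norm y} y * f y)"
  by (rule integrable_indicator_open_mult) (auto intro: open_Collect_less continuous_intros)

lemma tail_integral_nonneg: "(\<And>y. 0 \<le> f y) \<Longrightarrow> 0 \<le> tail_integral f r"
  unfolding tail_integral_def by (intro integral_nonneg_AE AE_I2) simp

lemma tail_integral_le_integral:
  fixes f :: "'a::euclidean_space \<Rightarrow> real"
  assumes "integrable lebesgue f" "\<And>y. 0 \<le> f y"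
  shows "tail_integral f r \<le> (LINT y|lebesgue. f y)"
  unfolding tail_integral_def
  using assms by (intro integral_mono integrable_tail) (auto simp: indicator_def)

lemma tail_integral_small:
  fixes f :: "'a::euclidean_space \<Rightarrow> real"
  assumes fi: "integrable lebesgue f" and eps: "\<epsilon> > 0"
  obtains \<rho> :: nat where "tail_integral f \<rho> < \<epsilon>"
proof -
  define s where "s n y = indicator {y. real n < norm y} y * f y" for n :: nat and y
  have "(\<lambda>n. integral\<^sup>L lebesgue (s n)) \<longlonglongrightarrow> 0"
  proof (rule integral_dominated_convergence[where f = "\<lambda>_. 0", simplified])
    show "integrable lebesgue (\<lambda>y. norm (f y))" using fi by simp
    show "s n \<in> borel_measurable lebesgue" for n
      unfolding s_def using integrable_tail[OF fi] by (rule borel_measurable_integrable)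
    show "AE y in lebesgue. norm (s n y) \<le> norm (f y)" for n
      by (auto simp: s_def indicator_def)
    show "AE y in lebesgue. (\<lambda>n. s n y) \<longlonglongrightarrow> 0"
    proof (rule AE_I2)
      fix y :: 'a
      have "eventually (\<lambda>n. s n y = 0) sequentially"
      proof (rule eventually_mono[OF eventually_ge_at_top[of "nat \<lceil>norm y\<rceil>"]])
        fix n assume "nat \<lceil>norm y\<rceil> \<le> n"
        then have "norm y \<le> real n" by linarith
        then show "s n y = 0" by (simp add: s_def)
      qed
      then show "(\<lambda>n. s n y) \<longlonglongrightarrow> 0" by (rule tendsto_eventually)
    qed
  qed
  then have "eventually (\<lambda>n. integral\<^sup>L lebesgue (s n) < \<epsilon>) sequentially"
    using eps by (intro order_tendstoD(2)) auto
  then obtain n where "integral\<^sup>L lebesgue (s n) < \<epsilon>" by (auto simp: eventually_sequentially)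
  then show ?thesis using that unfolding s_def tail_integral_def by blast
qed

lemma integral_ball_le_tail_integral:
  fixes f :: "'a::euclidean_space \<Rightarrow> real"
  assumes fi: "integrable lebesgue f" and f0: "\<And>y. 0 \<le> f y" and x: "r + R \<le> norm x"
  shows "(LINT z|lebesgue. indicator (ball x R) z * f z) \<le> tail_integral f r"
  unfolding tail_integral_def
proof (intro integral_mono integrable_tail fi)
  show "integrable lebesgue (\<lambda>z. indicator (ball x R) z * f z)"
    by (rule integrable_indicator_open_mult[OF fi]) simp
  show "indicator (ball x R) z * f z \<le> indicator {y. r < norm y} z * f z" for z
    using x norm_triangle_sub[of x z] f0[of z] by (auto simp: indicator_def dist_norm)
qed

lemma integrable_local_log_kernel:
  fixes f :: "'a::euclidean_space \<Rightarrow> real"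
  assumes fi: "integrable lebesgue f" and f0: "\<And>y. 0 \<le> f y"
    and hi: "integrable lebesgue (\<lambda>y. ln ((1 + norm y) / norm (x - y)) * f y)"
  shows "integrable lebesgue (\<lambda>y. indicator (ball x 1) y * (- ln (norm (x - y))) * f y)"
proof (rule Bochner_Integration.integrable_bound[OF hi])
  have "f \<in> borel_measurable lebesgue" using fi by (rule borel_measurable_integrable)
  moreover have "(\<lambda>y. indicator (ball x 1) y * (- ln (norm (x - y)))) \<in> borel_measurable lebesgue"
    by (rule measurable_completion) measurable
  ultimately show "(\<lambda>y. indicator (ball x 1) y * (- ln (norm (x - y))) * f y) \<in> borel_measurable lebesgue"
    by (simp add: borel_measurable_times)
  show "AE y in lebesgue. norm (indicator (ball x 1) y * (- ln (norm (x - y))) * f y)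
      \<le> norm (ln ((1 + norm y) / norm (x - y)) * f y)"
  proof (rule AE_I2)
    fix y :: 'a
    show "norm (indicator (ball x 1) y * (- ln (norm (x - y))) * f y)
      \<le> norm (ln ((1 + norm y) / norm (x - y)) * f y)"
    proof (cases "y \<in> ball x 1 \<and> y \<noteq> x")
      case False
      then show ?thesis by (auto simp: indicator_def)
    next
      case True
      define d where "d = norm (x - y)"
      have d: "0 < d" "d < 1" using True by (auto simp: d_def dist_norm)
      have "- ln d \<le> ln ((1 + norm y) / d)"
        using d ln_ge_zero[of "1 + norm y"] by (simp add: ln_divide_pos add_pos_nonneg)
      then have "- ln d * f y \<le> \<bar>ln ((1 + norm y) / d)\<bar> * f y"
        using f0[of y] by (intro mult_right_mono) auto
      moreover have "0 \<le> - ln d" using d by simp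
      ultimately show ?thesis using True f0[of y] by (simp add: d_def[symmetric] abs_mult)
    qed
  qed
qed

lemma local_log_potential_eq_0:
  fixes f :: "'a::euclidean_space \<Rightarrow> real"
  assumes "AE y in lebesgue. y \<in> ball x 1 \<longrightarrow> f y = 0"
  shows "local_log_potential f x = 0"
  unfolding local_log_potential_def
  using assms by (intro integral_eq_zero_AE) (auto elim: AE_mp simp: indicator_def)

subsection \<open>Comparison of the potential with the logarithm\<close>

lemma log_potential_plus_log_nonneg:
  fixes f :: "'a::euclidean_space \<Rightarrow> real"
  assumes fi: "integrable lebesgue f" and f0: "\<And>y. 0 \<le> f y"
    and hi: "integrable lebesgue (\<lambda>y. ln ((1 + norm y) / norm (x - y)) * f y)"
    and "1 \<le> norm x"
  shows "0 \<le> (LINT y|lebesgue. ln ((1 + norm y) / norm (x - y)) * f y) + (LINT y|lebesgue. f y) * ln (norm x)"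
proof -
  have "0 \<le> (LINT y|lebesgue. (ln ((1 + norm y) / norm (x - y)) + ln (norm x)) * f y)"
    using assms by (intro integral_nonneg_AE AE_I2 mult_nonneg_nonneg ln_kernel_plus_ln_nonneg)
  also have "\<dots> = (LINT y|lebesgue. ln ((1 + norm y) / norm (x - y)) * f y) + (LINT y|lebesgue. f y) * ln (norm x)"
    using hi fi by (simp add: distrib_right mult.commute[of "ln (norm x)"])
  finally show ?thesis .
qed

lemma log_potential_plus_log_le:
  fixes f :: "'a::euclidean_space \<Rightarrow> real"
  assumes fi: "integrable lebesgue f" and f0: "\<And>y. 0 \<le> f y"
    and hi: "integrable lebesgue (\<lambda>y. ln ((1 + norm y) / norm (x - y)) * f y)"
    and x: "3 \<le> norm x" and rho: "0 \<le> \<rho>" "2 * \<rho> \<le> norm x"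
  shows "(LINT y|lebesgue. ln ((1 + norm y) / norm (x - y)) * f y) + (LINT y|lebesgue. f y) * ln (norm x)
     \<le> (ln 2 + ln (1 + \<rho>)) * (LINT y|lebesgue. f y) + 5 * ln (norm x) * tail_integral f \<rho>
       + local_log_potential f x"
proof -
  have wi: "integrable lebesgue (\<lambda>y. indicator (ball x 1) y * (- ln (norm (x - y))) * f y)"
    by (rule integrable_local_log_kernel[OF fi f0 hi])
  have ti: "integrable lebesgue (\<lambda>y. indicator {y. \<rho> < norm y} y * f y)"
    by (rule integrable_tail[OF fi])
  have "(LINT y|lebesgue. ln ((1 + norm y) / norm (x - y)) * f y) + (LINT y|lebesgue. f y) * ln (norm x)
      = (LINT y|lebesgue. (ln ((1 + norm y) / norm (x - y)) + ln (norm x)) * f y)"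
    using hi fi by (simp add: distrib_right mult.commute[of "ln (norm x)"])
  also have "\<dots> \<le> (LINT y|lebesgue. (ln 2 + ln (1 + \<rho>)) * f y
       + 5 * ln (norm x) * (indicator {y. \<rho> < norm y} y * f y)
       + indicator (ball x 1) y * (- ln (norm (x - y))) * f y)"
  proof (rule integral_mono)
    show "integrable lebesgue (\<lambda>y. (ln ((1 + norm y) / norm (x - y)) + ln (norm x)) * f y)"
      using hi fi by (simp add: distrib_right)
    show "integrable lebesgue (\<lambda>y. (ln 2 + ln (1 + \<rho>)) * f y
       + 5 * ln (norm x) * (indicator {y. \<rho> < norm y} y * f y)
       + indicator (ball x 1) y * (- ln (norm (x - y))) * f y)"
      using wi ti fi by (intro Bochner_Integration.integrable_add integrable_mult_right)
    show "(ln ((1 + norm y) / norm (x - y)) + ln (norm x)) * f y \<le> (ln 2 + ln (1 + \<rho>)) * f y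
       + 5 * ln (norm x) * (indicator {y. \<rho> < norm y} y * f y)
       + indicator (ball x 1) y * (- ln (norm (x - y))) * f y" for y
      using mult_right_mono[OF ln_kernel_plus_ln_le[OF x rho, of y] f0[of y]]
      by (simp add: algebra_simps)
  qed
  also have "\<dots> = (ln 2 + ln (1 + \<rho>)) * (LINT y|lebesgue. f y) + 5 * ln (norm x) * tail_integral f \<rho>
       + local_log_potential f x"
    using wi ti fi by (simp add: tail_integral_def local_log_potential_def)
  finally show ?thesis .
qed

lemma eventually_norm_ge_at_infinity: "eventually (\<lambda>x. R \<le> norm x) at_infinity"
  unfolding eventually_at_infinity by blast

lemma potential_le_local_log_potential:
  fixes f v :: "'a::euclidean_space \<Rightarrow> real"
  assumes fi: "integrable lebesgue f" and f0: "\<And>y. 0 \<le> f y"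
    and hint: "\<And>x. integrable lebesgue (\<lambda>y. ln ((1 + norm y) / norm (x - y)) * f y)"
    and gam: "0 < \<gamma>"
    and veq: "\<And>x. v x = 1 / \<gamma> * (LINT y|lebesgue. ln ((1 + norm y) / norm (x - y)) * f y) + c"
  shows "eventually (\<lambda>y. v y \<le> local_log_potential f y / \<gamma> + c) at_infinity"
proof -
  define \<alpha> where "\<alpha> = (LINT y|lebesgue. f y)"
  obtain \<rho> :: nat where tail: "10 * tail_integral f \<rho> \<le> \<alpha>"
  proof (cases "0 < \<alpha>")
    case True
    then obtain \<rho> :: nat where "tail_integral f \<rho> < \<alpha> / 10"
      using tail_integral_small[OF fi, of "\<alpha> / 10"] by auto
    then show ?thesis using that[of \<rho>] by simp
  next
    case False
    then show ?thesis
      using that[of 0] tail_integral_le_integral[OF fi f0, where r = 0] tail_integral_nonneg[OF f0, where r = 0]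
      by (simp add: \<alpha>_def)
  qed
  define A where "A = ln 2 + ln (1 + real \<rho>)"
  show ?thesis
    using eventually_norm_ge_at_infinity[of "max 3 (max (2 * real \<rho>) (exp (2 * A)))"]
  proof eventually_elim
    case (elim y)
    then have y: "3 \<le> norm y" "2 * real \<rho> \<le> norm y" "exp (2 * A) \<le> norm y" by auto
    define T where "T = ln (norm y)"
    have T0: "0 \<le> T" using y(1) by (simp add: T_def)
    have "2 * A \<le> T"
      using ln_mono[OF y(3) exp_gt_zero] by (simp add: T_def)
    moreover have "0 \<le> \<alpha>" unfolding \<alpha>_def using f0 by (intro integral_nonneg_AE AE_I2) auto
    ultimately have "A * \<alpha> \<le> T / 2 * \<alpha>" by (intro mult_right_mono) auto
    moreover have "5 * T * tail_integral f \<rho> \<le> T / 2 * \<alpha>"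
      using mult_left_mono[OF tail T0] by simp
    (* the term alpha ln |y| absorbs the constant and the tail contribution *)
    moreover note log_potential_plus_log_le[OF fi f0 hint y(1) _ y(2)]
    ultimately have "(LINT z|lebesgue. ln ((1 + norm z) / norm (y - z)) * f z) \<le> local_log_potential f y"
      by (simp add: A_def \<alpha>_def T_def algebra_simps)
    then show ?case using veq[of y] gam by (simp add: divide_right_mono)
  qed
qed

subsection \<open>The Brezis--Merle estimate for the local potential\<close>

lemma ex_half_power_interval:
  fixes d :: real
  assumes "0 < d" "d < 1"
  obtains k :: nat where "(1/2)^(k+1) \<le> d" "d < (1/2)^k"
proof -
  obtain n where n: "(1/2::real)^n < d" using real_arch_pow_inv[of d "1/2"] assms by auto
  define k where "k = (LEAST k. (1/2::real)^(k+1) \<le> d)"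
  have "(1/2::real)^(n+1) \<le> d" using n assms(1) by (simp; linarith)
  then have k1: "(1/2::real)^(k+1) \<le> d" unfolding k_def by (rule LeastI)
  have k2: "d < (1/2)^k"
  proof (cases k)
    case 0
    then show ?thesis using assms by simp
  next
    case (Suc j)
    have "\<not> (1/2::real)^(j+1) \<le> d"
    proof
      assume "(1/2::real)^(j+1) \<le> d"
      then have "k \<le> j" unfolding k_def by (rule Least_le)
      then show False using Suc by simp
    qed
    then show ?thesis using Suc by simp
  qed
  show ?thesis using k1 k2 that by blast
qed

lemma inverse_dist_le_dyadic_sum:
  fixes y z :: "'a::real_normed_vector"
  shows "ennreal (indicator (ball z 1) y / norm (y - z))
    \<le> (\<Sum>k. ennreal (2^(k+1)) * indicator (ball z ((1/2)^k)) y)"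
proof -
  define g where "g k = ennreal (2^(k+1)) * indicator (ball z ((1/2)^k)) y" for k :: nat
  have "ennreal (indicator (ball z 1) y / norm (y - z)) \<le> (\<Sum>k. g k)"
  proof (cases "y \<in> ball z 1 \<and> y \<noteq> z")
    case False
    then show ?thesis by (auto simp: indicator_def)
  next
    case True
    define d where "d = norm (y - z)"
    have d: "0 < d" "d < 1" using True by (auto simp: d_def dist_norm norm_minus_commute)
    obtain k :: nat where k: "(1/2)^(k+1) \<le> d" "d < (1/2)^k" using ex_half_power_interval[OF d] .
    have "1 / d \<le> 1 / (1/2)^(k+1)" using k(1) d(1) by (intro divide_left_mono) auto
    then have "1 / d \<le> 2^(k+1)" by (simp add: power_one_over)
    moreover have "y \<in> ball z ((1/2)^k)" using k(2) by (simp add: d_def dist_norm norm_minus_commute)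
    ultimately have "ennreal (indicator (ball z 1) y / norm (y - z)) \<le> g k"
      using True by (simp add: g_def d_def ennreal_leI)
    also have "\<dots> \<le> (\<Sum>i<Suc k. g i)" by (rule member_le_sum) auto
    also have "\<dots> \<le> (\<Sum>i. g i)" by (rule sum_le_suminf) auto
    finally show ?thesis .
  qed
  then show ?thesis by (simp only: g_def)
qed

(* The ball of radius 2^-k has volume V 2^(-k n) <= V 4^-k because n >= 2, so the dyadic series converges. *)

lemma nn_integral_inverse_dist_ball_le:
  fixes z :: "'a::euclidean_space"
  assumes N2: "2 \<le> DIM('a)"
  shows "(\<integral>\<^sup>+ y. ennreal (indicator (ball z 1) y / norm (y - z)) \<partial>lborel)
    \<le> ennreal (4 * unit_ball_vol DIM('a))"
proof -
  define V where "V = unit_ball_vol DIM('a)"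
  have V0: "V \<ge> 0" by (simp add: V_def)
  have "(\<integral>\<^sup>+ y. ennreal (indicator (ball z 1) y / norm (y - z)) \<partial>lborel)
      \<le> (\<integral>\<^sup>+ y. (\<Sum>k. ennreal (2^(k+1)) * indicator (ball z ((1/2)^k)) y) \<partial>lborel)"
    by (intro nn_integral_mono inverse_dist_le_dyadic_sum)
  also have "\<dots> = (\<Sum>k. \<integral>\<^sup>+ y. ennreal (2^(k+1)) * indicator (ball z ((1/2)^k)) y \<partial>lborel)"
    by (rule nn_integral_suminf) simp
  also have "\<dots> = (\<Sum>k. ennreal (2^(k+1) * (V * ((1/2)^k)^DIM('a))))"
    using V0 by (simp add: nn_integral_cmult_indicator emeasure_ball V_def ennreal_mult)
  also have "\<dots> \<le> (\<Sum>k. ennreal ((2 * V) * (1/2)^k))"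
  proof (intro suminf_le ennreal_leI)
    fix k
    have "((1/2::real)^k)^DIM('a) \<le> ((1/2)^k)^2"
      using N2 by (intro power_decreasing) (auto intro: power_le_one)
    then have "2^(k+1) * (V * ((1/2::real)^k)^DIM('a)) \<le> 2^(k+1) * (V * ((1/2)^k)^2)"
      using V0 by (intro mult_left_mono) auto
    also have "\<dots> = (2 * V) * (1/2)^k"
      by (simp add: power_one_over field_simps power_add power2_eq_square)
    finally show "2^(k+1) * (V * ((1/2::real)^k)^DIM('a)) \<le> (2 * V) * (1/2)^k" .
  qed auto
  also have "\<dots> = ennreal (4 * V)"
  proof (rule suminf_ennreal_eq)
    show "0 \<le> 2 * V * (1 / 2) ^ k" for k using V0 by simp
    have "(\<lambda>k. (2 * V) * (1/2::real)^k) sums ((2 * V) * (1 / (1 - 1/2)))"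
      by (intro sums_mult geometric_sums) simp
    then show "(\<lambda>k. (2 * V) * (1/2::real)^k) sums (4 * V)" by simp
  qed
  finally show ?thesis by (simp add: V_def)
qed

lemma ln_squared_le_inverse:
  fixes d :: real
  assumes "0 < d" "d < 1"
  shows "(ln d)\<^sup>2 \<le> 1 / d"
proof -
  define u where "u = - ln d"
  have u0: "0 \<le> u" using assms by (simp add: u_def)
  have "u / 2 \<le> exp (u / 2) / exp 1"
    using exp_ge_add_one_self[of "u / 2 - 1"] by (simp add: exp_diff)
  then have "u / 2 * exp 1 \<le> exp (u / 2)" by (simp add: field_simps)
  moreover have "u / 2 * 2 \<le> u / 2 * exp 1"
    using u0 exp_ge_add_one_self[of 1] by (intro mult_left_mono) auto
  ultimately have "u \<le> exp (u / 2)" by linarith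
  then have "u\<^sup>2 \<le> (exp (u / 2))\<^sup>2" using u0 by (intro power_mono) auto
  also have "\<dots> = 1 / d"
    using assms by (simp add: u_def power2_eq_square exp_add[symmetric] exp_minus inverse_eq_divide)
  finally show ?thesis by (simp add: u_def)
qed

lemma neg_ln_mult_le_inverse_plus_square:
  fixes d a C e :: real
  assumes d: "0 < d" "d < 1" and a: "0 \<le> a" "a \<le> C * e" and C: "0 \<le> C"
  shows "- ln d * a \<le> C * (1 / d + e\<^sup>2)"
proof -
  have l0: "0 \<le> - ln d" using d by simp
  have "- ln d * a \<le> C * (- ln d * e)" using mult_left_mono[OF a(2) l0] by (simp add: mult_ac)
  also have "\<dots> \<le> C * ((ln d)\<^sup>2 + e\<^sup>2)"
  proof (rule mult_left_mono[OF _ C])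
    have "0 \<le> (ln d + e)\<^sup>2" "0 \<le> (ln d)\<^sup>2 + e\<^sup>2" by simp_all
    then show "- ln d * e \<le> (ln d)\<^sup>2 + e\<^sup>2" unfolding power2_sum by linarith
  qed
  also have "\<dots> \<le> C * (1 / d + e\<^sup>2)"
    using C ln_squared_le_inverse[OF d] by (intro mult_left_mono) auto
  finally show ?thesis .
qed

lemma exp_scaled_log_singularity_le:
  fixes y z :: "'a::real_normed_vector"
  assumes "0 \<le> s" "s \<le> 1"
  shows "exp (s * max 0 (- ln (norm (y - z)))) \<le> 1 + indicator (ball z 1) y / norm (y - z)"
proof (cases "y \<in> ball z 1 \<and> y \<noteq> z")
  case True
  define d where "d = norm (y - z)"
  have d: "0 < d" "d < 1" using True by (auto simp: d_def dist_norm norm_minus_commute)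
  then have l: "0 < - ln d" by simp
  have "exp (s * max 0 (- ln d)) \<le> exp (- ln d)"
    using l assms by (simp add: mult_left_le_one_le)
  also have "\<dots> = 1 / d" using d by (simp add: exp_minus inverse_eq_divide)
  finally show ?thesis using True by (simp add: d_def)
next
  case False
  then have "y = z \<or> 1 \<le> norm (y - z)" by (auto simp: dist_norm norm_minus_commute)
  then have "max 0 (- ln (norm (y - z))) = 0" by auto
  then show ?thesis by (simp add: indicator_def)
qed

lemma local_log_kernel_eq_truncated:
  fixes x y z :: "'a::real_normed_vector"
  assumes "y \<in> ball x 1"
  shows "indicator (ball x 2) z * max 0 (- ln (norm (y - z))) = indicator (ball y 1) z * (- ln (norm (y - z)))"
proof (cases "z \<in> ball y 1")
  case True
  then have "z \<in> ball x 2" using assms dist_triangle[of x z y] by (auto simp: dist_commute)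
  moreover have "max 0 (- ln (norm (y - z))) = - ln (norm (y - z))"
    using True by (cases "z = y") (auto simp: dist_norm)
  ultimately show ?thesis using True by simp
next
  case False
  then show ?thesis by (auto simp: dist_norm)
qed

(* Jensen's inequality for exp and the probability density 1_B(x,2) f / m, realised by the tangent
   line e^a (1 + u - a) <= e^u at a = t w(y). *)

lemma jensen_exp_local_log_potential:
  fixes f :: "'a::euclidean_space \<Rightarrow> real"
  assumes fi: "integrable lebesgue f" and f0: "\<And>y. 0 \<le> f y"
    and wyi: "integrable lebesgue (\<lambda>z. indicator (ball y 1) z * (- ln (norm (y - z))) * f z)"
    and y: "y \<in> ball x 1"
    and m: "m = (LINT z|lebesgue. indicator (ball x 2) z * f z)"
  shows "ennreal (m * exp (t * local_log_potential f y))
    \<le> (\<integral>\<^sup>+ z. ennreal (indicator (ball x 2) z * f z * exp (t * m * max 0 (- ln (norm (y - z))))) \<partial>lebesgue)"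
proof -
  define L where "L z = max 0 (- ln (norm (y - z)))" for z
  define h where "h z = indicator (ball x 2) z * f z" for z
  define a where "a = t * local_log_potential f y"
  have h0: "0 \<le> h z" for z using f0[of z] by (simp add: h_def)
  have hL: "h z * L z = indicator (ball y 1) z * (- ln (norm (y - z))) * f z" for z
    using local_log_kernel_eq_truncated[OF y, of z] by (simp add: h_def L_def mult_ac)
  have hi: "integrable lebesgue h" unfolding h_def by (rule integrable_indicator_open_mult[OF fi]) simp
  have hLi: "integrable lebesgue (\<lambda>z. h z * L z)" unfolding hL by (rule wyi)
  define lower where "lower z = exp a * ((1 - a) * h z + t * m * (h z * L z))" for z
  have li: "integrable lebesgue lower"
    unfolding lower_def using hi hLi by (intro integrable_mult_right Bochner_Integration.integrable_add) auto
  have "integral\<^sup>L lebesgue lower = exp a * ((1 - a) * m + t * m * local_log_potential f y)"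
    unfolding lower_def local_log_potential_def m h_def[symmetric] hL[symmetric] using hi hLi by simp
  then have "m * exp a = integral\<^sup>L lebesgue lower" by (simp add: a_def algebra_simps)
  also have "\<dots> \<le> integral\<^sup>L lebesgue (\<lambda>z. max 0 (lower z))"
    using li by (intro integral_mono) (auto intro!: integrable_max)
  finally have "ennreal (m * exp a) \<le> (\<integral>\<^sup>+ z. ennreal (max 0 (lower z)) \<partial>lebesgue)"
    using li by (subst nn_integral_eq_integral) (auto intro!: integrable_max ennreal_leI)
  also have "\<dots> \<le> (\<integral>\<^sup>+ z. ennreal (h z * exp (t * m * L z)) \<partial>lebesgue)"
  proof (intro nn_integral_mono ennreal_leI)
    fix z
    have "exp a * (1 + (t * m * L z - a)) \<le> exp a * exp (t * m * L z - a)"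
      by (intro mult_left_mono exp_ge_add_one_self) simp
    also have "\<dots> = exp (t * m * L z)" by (simp add: exp_diff)
    finally have "h z * (exp a * (1 + (t * m * L z - a))) \<le> h z * exp (t * m * L z)"
      using h0[of z] by (rule mult_left_mono)
    then have "lower z \<le> h z * exp (t * m * L z)" by (simp add: lower_def algebra_simps)
    then show "max 0 (lower z) \<le> h z * exp (t * m * L z)" using h0[of z] by simp
  qed
  finally show ?thesis by (simp add: a_def h_def L_def)
qed

lemma nn_integral_ball_exp_log_singularity_le:
  fixes x z :: "'a::euclidean_space"
  assumes N2: "2 \<le> DIM('a)" and s: "0 \<le> s" "s \<le> 1"
  shows "(\<integral>\<^sup>+ y. indicator (ball x 1) y * ennreal (exp (s * max 0 (- ln (norm (y - z))))) \<partial>lborel)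
    \<le> ennreal (5 * unit_ball_vol DIM('a))"
proof -
  define V where "V = unit_ball_vol DIM('a)"
  have "(\<integral>\<^sup>+ y. indicator (ball x 1) y * ennreal (exp (s * max 0 (- ln (norm (y - z))))) \<partial>lborel)
      \<le> (\<integral>\<^sup>+ y. indicator (ball x 1) y + ennreal (indicator (ball z 1) y / norm (y - z)) \<partial>lborel)"
  proof (intro nn_integral_mono)
    fix y
    show "indicator (ball x 1) y * ennreal (exp (s * max 0 (- ln (norm (y - z)))))
        \<le> indicator (ball x 1) y + ennreal (indicator (ball z 1) y / norm (y - z))"
    proof (cases "y \<in> ball x 1")
      case True
      have "ennreal (exp (s * max 0 (- ln (norm (y - z))))) \<le> ennreal (1 + indicator (ball z 1) y / norm (y - z))"
        using exp_scaled_log_singularity_le[OF s, of y z] by (rule ennreal_leI)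
      then show ?thesis using True by (simp add: ennreal_plus)
    qed simp
  qed
  also have "\<dots> = emeasure lborel (ball x 1) + (\<integral>\<^sup>+ y. ennreal (indicator (ball z 1) y / norm (y - z)) \<partial>lborel)"
    by (subst nn_integral_add) auto
  also have "\<dots> \<le> ennreal V + ennreal (4 * V)"
    using nn_integral_inverse_dist_ball_le[OF N2, of z] by (simp add: emeasure_ball V_def)
  also have "\<dots> = ennreal (5 * V)" by (simp add: V_def ennreal_plus[symmetric] del: ennreal_plus)
  finally show ?thesis by (simp add: V_def)
qed

lemma nn_integral_ball_log_convolution_le:
  fixes g :: "'a::euclidean_space \<Rightarrow> real"
  assumes N2: "2 \<le> DIM('a)" and g[measurable]: "g \<in> borel_measurable lborel" and g0: "\<And>z. 0 \<le> g z"
    and s: "0 \<le> s" "s \<le> 1"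
  shows "(\<integral>\<^sup>+ y. indicator (ball x 1) y *
            (\<integral>\<^sup>+ z. ennreal (g z * exp (s * max 0 (- ln (norm (y - z))))) \<partial>lborel) \<partial>lborel)
    \<le> (\<integral>\<^sup>+ z. ennreal (g z) \<partial>lborel) * ennreal (5 * unit_ball_vol DIM('a))"
proof -
  define E where "E y z = ennreal (exp (s * max 0 (- ln (norm (y - z)))))" for y z :: 'a
  have "(\<integral>\<^sup>+ y. indicator (ball x 1) y *
            (\<integral>\<^sup>+ z. ennreal (g z * exp (s * max 0 (- ln (norm (y - z))))) \<partial>lborel) \<partial>lborel)
      = (\<integral>\<^sup>+ y. (\<integral>\<^sup>+ z. ennreal (g z) * (indicator (ball x 1) y * E y z) \<partial>lborel) \<partial>lborel)"
    using g0 by (simp add: E_def nn_integral_cmult[symmetric] ennreal_mult mult_ac)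
  also have "\<dots> = (\<integral>\<^sup>+ z. (\<integral>\<^sup>+ y. ennreal (g z) * (indicator (ball x 1) y * E y z) \<partial>lborel) \<partial>lborel)"
    by (rule lborel_pair.Fubini') (simp add: E_def)
  also have "\<dots> = (\<integral>\<^sup>+ z. ennreal (g z) * (\<integral>\<^sup>+ y. indicator (ball x 1) y * E y z \<partial>lborel) \<partial>lborel)"
    by (subst nn_integral_cmult) (auto simp: E_def)
  also have "\<dots> \<le> (\<integral>\<^sup>+ z. ennreal (g z) * ennreal (5 * unit_ball_vol DIM('a)) \<partial>lborel)"
    unfolding E_def by (intro nn_integral_mono mult_left_mono nn_integral_ball_exp_log_singularity_le N2 s) auto
  also have "\<dots> = (\<integral>\<^sup>+ z. ennreal (g z) \<partial>lborel) * ennreal (5 * unit_ball_vol DIM('a))"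
    by (rule nn_integral_multc) simp
  finally show ?thesis .
qed

lemma local_log_potential_le_nn_integral:
  fixes f :: "'a::euclidean_space \<Rightarrow> real" and G :: "'a \<Rightarrow> ennreal"
  assumes N2: "2 \<le> DIM('a)" and f0: "\<And>y. 0 \<le> f y"
    and wint: "integrable lebesgue (\<lambda>y. indicator (ball x 1) y * (- ln (norm (x - y))) * f y)"
    and fb: "AE y in lebesgue. y \<in> ball x 1 \<longrightarrow> f y \<le> C * exp (\<phi> * local_log_potential f y)"
    and C: "0 \<le> C"
    and G[measurable]: "G \<in> borel_measurable lborel"
    and G_ge: "\<And>y. y \<in> ball x 1 \<Longrightarrow> ennreal (exp (2 * \<phi> * local_log_potential f y)) \<le> G y"
  shows "ennreal (local_log_potential f x)
    \<le> ennreal C * (ennreal (4 * unit_ball_vol DIM('a)) + (\<integral>\<^sup>+ y. indicator (ball x 1) y * G y \<partial>lborel))"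
proof -
  define A where "A y = ennreal (indicator (ball x 1) y / norm (y - x))" for y
  define B where "B y = indicator (ball x 1) y * G y" for y
  have A[measurable]: "A \<in> borel_measurable lborel" unfolding A_def by measurable
  have B[measurable]: "B \<in> borel_measurable lborel" unfolding B_def by measurable
  have pw: "AE y in lborel. ennreal (indicator (ball x 1) y * (- ln (norm (x - y))) * f y) \<le> ennreal C * (A y + B y)"
    using fb unfolding AE_completion_iff
  proof eventually_elim
    case (elim y)
    show ?case
    proof (cases "y \<in> ball x 1 \<and> y \<noteq> x")
      case True
      define d where "d = norm (x - y)"
      have d: "0 < d" "d < 1" using True by (auto simp: d_def dist_norm)
      have "- ln d * f y \<le> C * (1 / d + (exp (\<phi> * local_log_potential f y))\<^sup>2)"
        using True elim f0[of y] C by (intro neg_ln_mult_le_inverse_plus_square d) auto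
      then have "ennreal (indicator (ball x 1) y * (- ln (norm (x - y))) * f y)
          \<le> ennreal (C * (1 / d + exp (2 * \<phi> * local_log_potential f y)))"
        using True by (simp add: d_def[symmetric] ennreal_leI power2_eq_square exp_add[symmetric] mult.assoc)
      also have "\<dots> = ennreal C * (ennreal (1 / d) + ennreal (exp (2 * \<phi> * local_log_potential f y)))"
        using C d by (simp add: ennreal_mult ennreal_plus)
      also have "\<dots> \<le> ennreal C * (A y + B y)"
        using True G_ge[of y] by (intro mult_left_mono add_mono) (auto simp: A_def B_def d_def norm_minus_commute)
      finally show ?thesis .
    qed (auto simp: indicator_def)
  qed
  have "ennreal (local_log_potential f x)
      = (\<integral>\<^sup>+ y. ennreal (indicator (ball x 1) y * (- ln (norm (x - y))) * f y) \<partial>lebesgue)"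
    unfolding local_log_potential_def
    by (intro nn_integral_eq_integral[symmetric] wint AE_I2 mult_nonneg_nonneg local_log_kernel_nonneg f0)
  also have "\<dots> = (\<integral>\<^sup>+ y. ennreal (indicator (ball x 1) y * (- ln (norm (x - y))) * f y) \<partial>lborel)"
    by (simp add: nn_integral_completion)
  also have "\<dots> \<le> (\<integral>\<^sup>+ y. ennreal C * (A y + B y) \<partial>lborel)"
    by (rule nn_integral_mono_AE[OF pw])
  also have "\<dots> = ennreal C * (\<integral>\<^sup>+ y. A y + B y \<partial>lborel)"
    by (rule nn_integral_cmult) measurable
  also have "\<dots> = ennreal C * (integral\<^sup>N lborel A + integral\<^sup>N lborel B)"
    by (simp only: nn_integral_add[OF A B])
  also have "\<dots> \<le> ennreal C * (ennreal (4 * unit_ball_vol DIM('a)) + integral\<^sup>N lborel B)"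
    unfolding A_def using nn_integral_inverse_dist_ball_le[OF N2, of x]
    by (intro mult_left_mono add_mono) auto
  finally show ?thesis unfolding B_def[abs_def] .
qed

(* The majorant is the convolution of 1_B(x,2) f / m with exp (2 phi m max 0 (ln (1 / |.|))), built from a
   Borel representative of f so that it is measurable. *)

lemma exp_local_log_potential_majorant:
  fixes f :: "'a::euclidean_space \<Rightarrow> real"
  assumes N2: "2 \<le> DIM('a)" and fi: "integrable lebesgue f" and f0: "\<And>y. 0 \<le> f y"
    and wint: "\<And>y. integrable lebesgue (\<lambda>z. indicator (ball y 1) z * (- ln (norm (y - z))) * f z)"
    and phi: "0 \<le> \<phi>"
    and m: "m = (LINT z|lebesgue. indicator (ball x 2) z * f z)" "0 < m" "2 * \<phi> * m \<le> 1"
  obtains G :: "'a \<Rightarrow> ennreal"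
  where "G \<in> borel_measurable lborel"
    and "\<And>y. y \<in> ball x 1 \<Longrightarrow> ennreal (exp (2 * \<phi> * local_log_potential f y)) \<le> G y"
    and "(\<integral>\<^sup>+ y. indicator (ball x 1) y * G y \<partial>lborel) \<le> ennreal (5 * unit_ball_vol DIM('a))"
proof -
  obtain g' where g'[measurable]: "g' \<in> borel_measurable lborel" and fg': "AE z in lborel. f z = g' z"
    using completion_ex_borel_measurable_real[OF borel_measurable_integrable[OF fi]] by blast
  define h where "h z = indicator (ball x 2) z * max 0 (g' z)" for z
  have h[measurable]: "h \<in> borel_measurable lborel" unfolding h_def by measurable
  have h0: "0 \<le> h z" for z by (simp add: h_def)
  have fh: "AE z in lborel. indicator (ball x 2) z * f z = h z"
    using fg' by eventually_elim (metis f0 h_def max.absorb2)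
  define s where "s = 2 * \<phi> * m"
  have s: "0 \<le> s" "s \<le> 1" using phi m by (auto simp: s_def)
  define E where "E y z = exp (s * max 0 (- ln (norm (y - z))))" for y z :: 'a
  define G where "G y = ennreal (1 / m) * (\<integral>\<^sup>+ z. ennreal (h z * E y z) \<partial>lborel)" for y
  show ?thesis
  proof
    show "G \<in> borel_measurable lborel" unfolding G_def E_def by measurable
  next
    fix y assume y: "y \<in> ball x 1"
    have "ennreal (m * exp (2 * \<phi> * local_log_potential f y))
        \<le> (\<integral>\<^sup>+ z. ennreal (indicator (ball x 2) z * f z * E y z) \<partial>lebesgue)"
      using jensen_exp_local_log_potential[OF fi f0 wint y m(1), where t = "2 * \<phi>"]
      by (simp add: E_def s_def mult_ac)
    also have "\<dots> = (\<integral>\<^sup>+ z. ennreal (h z * E y z) \<partial>lborel)"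
      unfolding nn_integral_completion using fh by (intro nn_integral_cong_AE) auto
    finally have "ennreal (1 / m) * ennreal (m * exp (2 * \<phi> * local_log_potential f y)) \<le> G y"
      unfolding G_def by (rule mult_left_mono) simp
    then show "ennreal (exp (2 * \<phi> * local_log_potential f y)) \<le> G y"
      using m(2) by (simp add: ennreal_mult[symmetric])
  next
    have int_h: "(\<integral>\<^sup>+ z. ennreal (h z) \<partial>lborel) = ennreal m"
    proof -
      have "(\<integral>\<^sup>+ z. ennreal (h z) \<partial>lborel) = (\<integral>\<^sup>+ z. ennreal (indicator (ball x 2) z * f z) \<partial>lebesgue)"
        unfolding nn_integral_completion using fh by (intro nn_integral_cong_AE) auto
      also have "\<dots> = ennreal m"
        unfolding m(1) using f0 by (intro nn_integral_eq_integral integrable_indicator_open_mult[OF fi]) auto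
      finally show ?thesis .
    qed
    have "(\<integral>\<^sup>+ y. indicator (ball x 1) y * G y \<partial>lborel)
        = ennreal (1 / m) * (\<integral>\<^sup>+ y. indicator (ball x 1) y * (\<integral>\<^sup>+ z. ennreal (h z * E y z) \<partial>lborel) \<partial>lborel)"
      unfolding G_def by (subst nn_integral_cmult[symmetric]) (auto simp: E_def mult_ac)
    also have "\<dots> \<le> ennreal (1 / m) * (ennreal m * ennreal (5 * unit_ball_vol DIM('a)))"
      using nn_integral_ball_log_convolution_le[OF N2 h h0 s, of x]
      by (intro mult_left_mono) (simp_all add: int_h E_def)
    also have "\<dots> = ennreal (5 * unit_ball_vol DIM('a))"
      using m(2) by (simp add: ennreal_mult[symmetric] mult.assoc[symmetric])
    finally show "(\<integral>\<^sup>+ y. indicator (ball x 1) y * G y \<partial>lborel) \<le> ennreal (5 * unit_ball_vol DIM('a))" .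
  qed
qed

lemma local_log_potential_le:
  fixes f :: "'a::euclidean_space \<Rightarrow> real"
  assumes N2: "2 \<le> DIM('a)" and fi: "integrable lebesgue f" and f0: "\<And>y. 0 \<le> f y"
    and wint: "\<And>y. integrable lebesgue (\<lambda>z. indicator (ball y 1) z * (- ln (norm (y - z))) * f z)"
    and fb: "AE y in lebesgue. y \<in> ball x 1 \<longrightarrow> f y \<le> C * exp (\<phi> * local_log_potential f y)"
    and C: "0 \<le> C" and phi: "0 \<le> \<phi>"
    and small: "2 * \<phi> * (LINT z|lebesgue. indicator (ball x 2) z * f z) \<le> 1"
  shows "local_log_potential f x \<le> 9 * C * unit_ball_vol DIM('a)"
proof -
  define V where "V = unit_ball_vol DIM('a)"
  have V0: "0 \<le> V" by (simp add: V_def)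
  define m where "m = (LINT z|lebesgue. indicator (ball x 2) z * f z)"
  have "0 \<le> m" unfolding m_def using f0 by (intro integral_nonneg_AE AE_I2) simp
  then consider "m = 0" | "0 < m" by linarith
  then show ?thesis
  proof cases
    case 1
    then have "AE z in lebesgue. indicator (ball x 2) z * f z = 0"
      using f0 integrable_indicator_open_mult[OF fi, of "ball x 2"] unfolding m_def
      by (subst (asm) integral_nonneg_eq_0_iff_AE) auto
    then have "AE y in lebesgue. y \<in> ball x 1 \<longrightarrow> f y = 0"
      by eventually_elim (auto simp: indicator_def)
    then have "local_log_potential f x = 0" by (rule local_log_potential_eq_0)
    then show ?thesis using C V0 unfolding V_def by simp
  next
    case 2
    obtain G where "G \<in> borel_measurable lborel"
      and "\<And>y. y \<in> ball x 1 \<Longrightarrow> ennreal (exp (2 * \<phi> * local_log_potential f y)) \<le> G y"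
      and "(\<integral>\<^sup>+ y. indicator (ball x 1) y * G y \<partial>lborel) \<le> ennreal (5 * V)"
      using exp_local_log_potential_majorant[OF N2 fi f0 wint phi m_def 2 small[folded m_def]]
      unfolding V_def by blast
    then have "ennreal (local_log_potential f x) \<le> ennreal C * (ennreal (4 * V) + ennreal (5 * V))"
      using local_log_potential_le_nn_integral[OF N2 f0 wint fb C] unfolding V_def
      by (meson add_left_mono mult_left_mono order_trans zero_le)
    also have "\<dots> = ennreal C * ennreal (9 * V)"
      using V0 by (subst ennreal_plus[symmetric]) auto
    also have "\<dots> = ennreal (9 * C * V)"
      using C V0 by (subst ennreal_mult[symmetric]) (auto simp: mult_ac)
    finally show ?thesis using C V0 by (subst (asm) ennreal_le_iff) (auto simp: V_def)
  qed
qed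

lemma local_log_potential_bounded_at_infinity:
  fixes f v :: "'a::euclidean_space \<Rightarrow> real"
  assumes N2: "2 \<le> DIM('a)" and fi: "integrable lebesgue f" and f0: "\<And>y. 0 \<le> f y"
    and hint: "\<And>x. integrable lebesgue (\<lambda>y. ln ((1 + norm y) / norm (x - y)) * f y)"
    and gam: "0 < \<gamma>"
    and veq: "\<And>x. v x = 1 / \<gamma> * (LINT y|lebesgue. ln ((1 + norm y) / norm (x - y)) * f y) + c"
    and \<nu>: "0 \<le> \<nu>" and C0: "0 \<le> C0"
    and fK: "AE y in lebesgue. 1 \<le> norm y \<longrightarrow> f y \<le> C0 * exp (\<nu> * v y)"
  shows "eventually (\<lambda>x. local_log_potential f x \<le> 9 * (C0 * exp (\<nu> * c)) * unit_ball_vol DIM('a))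
    at_infinity"
proof -
  define \<phi> where "\<phi> = \<nu> / \<gamma>"
  define C where "C = C0 * exp (\<nu> * c)"
  have \<phi>: "0 \<le> \<phi>" using \<nu> gam by (simp add: \<phi>_def)
  have C: "0 \<le> C" using C0 by (simp add: C_def)
  have wint: "integrable lebesgue (\<lambda>z. indicator (ball y 1) z * (- ln (norm (y - z))) * f z)" for y
    by (rule integrable_local_log_kernel[OF fi f0 hint])
  obtain R0 where vup: "\<And>y. R0 \<le> norm y \<Longrightarrow> v y \<le> local_log_potential f y / \<gamma> + c"
    using potential_le_local_log_potential[OF fi f0 hint gam veq] unfolding eventually_at_infinity by blast
  obtain \<rho> :: nat where tail: "tail_integral f \<rho> < 1 / (2 * \<phi> + 1)"
    using tail_integral_small[OF fi, of "1 / (2 * \<phi> + 1)"] \<phi> by auto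
  show ?thesis
    using eventually_norm_ge_at_infinity[of "max (R0 + 1) (real \<rho> + 2)"]
  proof eventually_elim
    case (elim x)
    have far: "R0 \<le> norm y" "1 \<le> norm y" if "y \<in> ball x 1" for y
      using that elim norm_triangle_sub[of x y] by (auto simp: dist_norm)
    have fb: "AE y in lebesgue. y \<in> ball x 1 \<longrightarrow> f y \<le> C * exp (\<phi> * local_log_potential f y)"
      using fK
    proof eventually_elim
      case (elim y)
      show ?case
      proof
        assume y: "y \<in> ball x 1"
        then have "f y \<le> C0 * exp (\<nu> * v y)" using elim far[OF y] by simp
        also have "\<dots> \<le> C0 * exp (\<nu> * (local_log_potential f y / \<gamma> + c))"
          using vup[OF far(1)[OF y]] \<nu> C0 by (auto intro!: mult_left_mono)
        also have "\<dots> = C * exp (\<phi> * local_log_potential f y)"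
          by (simp add: C_def \<phi>_def exp_add[symmetric] algebra_simps)
        finally show "f y \<le> C * exp (\<phi> * local_log_potential f y)" .
      qed
    qed
    have "(LINT z|lebesgue. indicator (ball x 2) z * f z) \<le> tail_integral f \<rho>"
      using elim by (intro integral_ball_le_tail_integral[OF fi f0]) auto
    then have "2 * \<phi> * (LINT z|lebesgue. indicator (ball x 2) z * f z) \<le> 2 * \<phi> * (1 / (2 * \<phi> + 1))"
      using tail \<phi> by (intro mult_left_mono) auto
    also have "\<dots> \<le> 1" using \<phi> by (simp add: field_simps)
    finally show ?case
      using local_log_potential_le[OF N2 fi f0 wint fb C \<phi>] by (simp add: C_def)
  qed
qed

subsection \<open>Asymptotics of the potential\<close>

lemma ln_norm_at_infinity: "filterlim (\<lambda>x::'a::real_normed_vector. ln (norm x)) at_top at_infinity"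
  by (rule filterlim_compose[OF ln_at_top filterlim_norm_at_top])

lemma const_over_ln_norm_tendsto_0: "((\<lambda>x::'a::real_normed_vector. c / ln (norm x)) \<longlongrightarrow> 0) at_infinity"
  by (intro tendsto_divide_0[OF tendsto_const] filterlim_at_top_imp_at_infinity ln_norm_at_infinity)

lemma log_potential_plus_log_over_log_tendsto_0:
  fixes f :: "'a::euclidean_space \<Rightarrow> real"
  assumes fi: "integrable lebesgue f" and f0: "\<And>y. 0 \<le> f y"
    and hint: "\<And>x. integrable lebesgue (\<lambda>y. ln ((1 + norm y) / norm (x - y)) * f y)"
    and bounded: "eventually (\<lambda>x. local_log_potential f x \<le> B) at_infinity"
  shows "((\<lambda>x. ((LINT y|lebesgue. ln ((1 + norm y) / norm (x - y)) * f y)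
              + (LINT y|lebesgue. f y) * ln (norm x)) / ln (norm x)) \<longlongrightarrow> 0) at_infinity"
proof (rule tendstoI)
  fix \<epsilon> :: real assume \<epsilon>: "0 < \<epsilon>"
  obtain \<rho> :: nat where tail: "tail_integral f \<rho> < \<epsilon> / 10"
    using tail_integral_small[OF fi, of "\<epsilon> / 10"] \<epsilon> by auto
  define K where "K = (ln 2 + ln (1 + real \<rho>)) * (LINT y|lebesgue. f y) + B"
  have "eventually (\<lambda>x. K / ln (norm x) < \<epsilon> / 2) at_infinity"
    using \<epsilon> by (intro order_tendstoD(2)[OF const_over_ln_norm_tendsto_0]) auto
  then show "eventually (\<lambda>x. dist (((LINT y|lebesgue. ln ((1 + norm y) / norm (x - y)) * f y)
              + (LINT y|lebesgue. f y) * ln (norm x)) / ln (norm x)) 0 < \<epsilon>) at_infinity"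
    using bounded eventually_norm_ge_at_infinity[of "max 3 (2 * real \<rho>)"]
  proof eventually_elim
    case (elim x)
    define T where "T = ln (norm x)"
    define D where "D = (LINT y|lebesgue. ln ((1 + norm y) / norm (x - y)) * f y) + (LINT y|lebesgue. f y) * T"
    have x: "3 \<le> norm x" "2 * real \<rho> \<le> norm x" using elim by auto
    then have T: "0 < T" unfolding T_def by (intro ln_gt_zero) linarith
    have "0 \<le> D" unfolding D_def T_def using x by (intro log_potential_plus_log_nonneg[OF fi f0 hint]) simp
    moreover have "D \<le> K + 5 * T * tail_integral f \<rho>"
      using log_potential_plus_log_le[OF fi f0 hint x(1) _ x(2)] elim by (simp add: D_def T_def K_def)
    then have "D / T \<le> K / T + 5 * tail_integral f \<rho>"
      using T by (simp add: divide_simps mult_ac)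
    moreover have "K / T < \<epsilon> / 2" using elim(1) by (simp add: T_def)
    ultimately have "D / T < \<epsilon>" using tail by linarith
    moreover have "0 \<le> D / T" using \<open>0 \<le> D\<close> T by simp
    ultimately show ?case by (simp add: D_def T_def dist_real_def)
  qed
qed

theorem log_potential_solution_over_log_tendsto:
  fixes f v :: "'a::euclidean_space \<Rightarrow> real"
  assumes N2: "2 \<le> DIM('a)" and fi: "integrable lebesgue f" and f0: "\<And>y. 0 \<le> f y"
    and hint: "\<And>x. integrable lebesgue (\<lambda>y. ln ((1 + norm y) / norm (x - y)) * f y)"
    and gam: "0 < \<gamma>"
    and veq: "\<And>x. v x = 1 / \<gamma> * (LINT y|lebesgue. ln ((1 + norm y) / norm (x - y)) * f y) + c"
    and \<nu>: "0 \<le> \<nu>" and C0: "0 \<le> C0"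
    and fK: "AE y in lebesgue. 1 \<le> norm y \<longrightarrow> f y \<le> C0 * exp (\<nu> * v y)"
  shows "((\<lambda>x. v x / ln (norm x)) \<longlongrightarrow> - (1 / \<gamma>) * (LINT y|lebesgue. f y)) at_infinity"
proof -
  define \<alpha> where "\<alpha> = (LINT y|lebesgue. f y)"
  define D where "D x = (LINT y|lebesgue. ln ((1 + norm y) / norm (x - y)) * f y) + \<alpha> * ln (norm x)" for x
  have "((\<lambda>x. D x / ln (norm x)) \<longlongrightarrow> 0) at_infinity"
    unfolding D_def \<alpha>_def
    by (rule log_potential_plus_log_over_log_tendsto_0[OF fi f0 hint
          local_log_potential_bounded_at_infinity[OF N2 fi f0 hint gam veq \<nu> C0 fK]])
  then have "((\<lambda>x. D x / ln (norm x) / \<gamma> - \<alpha> / \<gamma> + c / ln (norm x)) \<longlongrightarrow> 0 / \<gamma> - \<alpha> / \<gamma> + 0) at_infinity"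
    using gam by (intro tendsto_intros const_over_ln_norm_tendsto_0) auto
  moreover have "eventually (\<lambda>x. D x / ln (norm x) / \<gamma> - \<alpha> / \<gamma> + c / ln (norm x) = v x / ln (norm x)) at_infinity"
    using eventually_norm_ge_at_infinity[of 2]
  proof eventually_elim
    case (elim x)
    then have "0 < ln (norm x)" by (intro ln_gt_zero) linarith
    then show ?case using gam by (simp add: veq[of x] D_def field_simps)
  qed
  ultimately show ?thesis by (simp add: Lim_transform_eventually \<alpha>_def)
qed

theorem mainTheorem11:
  fixes K v :: "real ^ 'n \<Rightarrow> real" and c :: real
  assumes n2: "CARD('n) \<ge> 2"
    and K_meas: "K \<in> borel_measurable lebesgue"
    and K_nonneg: "\<And>x. K x \<ge> 0"
    and K_Linf: "\<exists>M. AE y in lebesgue. y \<notin> ball 0 1 \<longrightarrow> \<bar>K y\<bar> \<le> M"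
    and Kv_L1: "integrable lebesgue (\<lambda>y. K y * exp (real CARD('n) * v y))"
    and int_ex: "\<And>x. integrable lebesgue
                  (\<lambda>y. ln ((1 + norm y) / norm (x - y)) * K y * exp (real CARD('n) * v y))"
    and v_eq: "\<And>x. v x = 1 / gamma_const CARD('n) *
                  (LINT y|lebesgue. ln ((1 + norm y) / norm (x - y)) * K y * exp (real CARD('n) * v y))
                  + c"
  shows "((\<lambda>x. v x / ln (norm x)) \<longlongrightarrow>
            - (1 / gamma_const CARD('n)) * (LINT y|lebesgue. K y * exp (real CARD('n) * v y)))
          at_infinity"
proof -
  define f where "f y = K y * exp (real CARD('n) * v y)" for y
  have fi: "integrable lebesgue f" using Kv_L1 unfolding f_def .
  have f0: "0 \<le> f y" for y using K_nonneg[of y] by (simp add: f_def)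
  have hint: "integrable lebesgue (\<lambda>y. ln ((1 + norm y) / norm (x - y)) * f y)" for x
    using int_ex[of x] unfolding f_def by (simp only: mult.assoc)
  have veq: "v x = 1 / gamma_const CARD('n) * (LINT y|lebesgue. ln ((1 + norm y) / norm (x - y)) * f y) + c" for x
    using v_eq[of x] unfolding f_def by (simp only: mult.assoc)
  obtain M where "AE y in lebesgue. y \<notin> ball 0 1 \<longrightarrow> \<bar>K y\<bar> \<le> M" using K_Linf by blast
  then have fK: "AE y in lebesgue. 1 \<le> norm y \<longrightarrow> f y \<le> max 0 M * exp (real CARD('n) * v y)"
    by eventually_elim (auto simp: f_def intro!: mult_right_mono)
  have N2: "2 \<le> DIM(real ^ 'n)" using n2 by simp
  have "((\<lambda>x. v x / ln (norm x)) \<longlongrightarrow> - (1 / gamma_const CARD('n)) * (LINT y|lebesgue. f y)) at_infinity"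
    by (rule log_potential_solution_over_log_tendsto[OF N2 fi f0 hint gamma_const_pos veq _ _ fK]) auto
  then show ?thesis unfolding f_def .
qed

end
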